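(* Let $P$ be a nonempty rational polyhedron whose affine hull is $\{x:Ax=b\}$, where $A,b$ are integral. Then for every prime $p$, $P$ contains a $p$-adic point if, and only if, there does not exist a real vector $y$ such that $y^\top A$ is integral and $y^\top b$ is not a $p$-adic rational.
   Context: A $p$-adic rational is a number $a/p^k$ with $a,k\in\mathbb{Z}$, $k\ge0$; a vector is $p$-adic if all entries are $p$-adic rationals. *)

theory Defs
  imports "HOL-Analysis.Analysis"
begin

definition padic_rat :: "nat \<Rightarrow> real \<Rightarrow> bool" where
  "padic_rat p r \<longleftrightarrow> (\<exists>a::int. \<exists>k::nat. r = of_int a / (of_nat p) ^ k)"

definition padic_vec :: "nat \<Rightarrow> real ^ 'n \<Rightarrow> bool" where
  "padic_vec p x \<longleftrightarrow> (\<forall>i. padic_rat p (x $ i))"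

definition integral_vec :: "real ^ 'n \<Rightarrow> bool" where
  "integral_vec x \<longleftrightarrow> (\<forall>i. x $ i \<in> \<int>)"

definition integral_mat :: "real ^ 'n ^ 'm \<Rightarrow> bool" where
  "integral_mat A \<longleftrightarrow> (\<forall>i j. A $ i $ j \<in> \<int>)"

definition rational_vec :: "real ^ 'n \<Rightarrow> bool" where
  "rational_vec x \<longleftrightarrow> (\<forall>i. x $ i \<in> \<rat>)"

definition rational_mat :: "real ^ 'n ^ 'm \<Rightarrow> bool" where
  "rational_mat A \<longleftrightarrow> (\<forall>i j. A $ i $ j \<in> \<rat>)"

definition polyhedron_of :: "real ^ 'n ^ 'k \<Rightarrow> real ^ 'k \<Rightarrow> (real ^ 'n) set" where
  "polyhedron_of M d = {x. \<forall>i. (M *v x) $ i \<le> d $ i}"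

end

(*
  If x is a p-adic point of P, then A x = b, so y.b = (y^T A) x is p-adic whenever y^T A is
  integral. Conversely, the dual condition says that y.b is p-adic for every y that is
  integral on the lattice L = A Z^n. Eliminating one coordinate at a time, using a generator
  of the i-th coordinates of L (as in Hermite normal form), gives p^k b in L for some k,
  i.e. a p-adic solution x0 of A x = b. The null space of the integral matrix A is spanned
  by integral vectors, so its p-adic points are dense in it; adding a suitable one to x0
  gives a p-adic point of the affine hull close to a relative interior point of P, and
  hence in P.
*)

theory Submission
  imports Defs
begin

lemma padic_rat_of_int [simp]: "padic_rat p (of_int a)"
  unfolding padic_rat_def by (rule exI[of _ a], rule exI[of _ 0]) simp

lemma padic_rat_zero [simp]: "padic_rat p 0"
  using padic_rat_of_int[of p 0] by simp

lemma padic_rat_Ints: "x \<in> \<int> \<Longrightarrow> padic_rat p x"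
  by (metis Ints_cases padic_rat_of_int)

lemma padic_rat_inverse_power: "padic_rat p (1 / real p ^ k)"
  unfolding padic_rat_def by (rule exI[of _ 1], rule exI[of _ k]) simp

lemma padic_rat_add:
  assumes "p > 0" "padic_rat p x" "padic_rat p y"
  shows "padic_rat p (x + y)"
proof -
  obtain a k c l where x: "x = of_int a / real p ^ k" and y: "y = of_int c / real p ^ l"
    using assms(2,3) unfolding padic_rat_def by blast
  have "x + y = of_int (a * int p ^ l + c * int p ^ k) / real p ^ (k + l)"
    using assms(1) by (simp add: x y field_simps power_add)
  then show ?thesis unfolding padic_rat_def by blast
qed

lemma padic_rat_mult:
  assumes "padic_rat p x" "padic_rat p y"
  shows "padic_rat p (x * y)"
proof -
  obtain a k c l where x: "x = of_int a / real p ^ k" and y: "y = of_int c / real p ^ l"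
    using assms unfolding padic_rat_def by blast
  have "x * y = of_int (a * c) / real p ^ (k + l)"
    by (simp add: x y power_add)
  then show ?thesis unfolding padic_rat_def by blast
qed

lemma padic_rat_sum:
  assumes "p > 0" "\<And>i. i \<in> S \<Longrightarrow> padic_rat p (f i)"
  shows "padic_rat p (sum f S)"
  using assms(2)
  by (induction S rule: infinite_finite_induct) (auto intro: padic_rat_add[OF assms(1)])

lemma not_padic_rat_inverse_Suc:
  assumes "p > 0"
  shows "\<not> padic_rat p (1 / (real p + 1))"
proof
  assume "padic_rat p (1 / (real p + 1))"
  then obtain a k where "1 / (real p + 1) = of_int a / real p ^ k"
    unfolding padic_rat_def by blast
  then have "real_of_int (int p ^ k) = real_of_int (a * (int p + 1))"
    using assms by (simp add: field_simps)
  then have "(int p + 1) dvd int p ^ k"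
    by (metis dvd_triv_right of_int_eq_iff)
  moreover have "coprime (int p + 1) (int p ^ k)"
    by simp
  ultimately have "is_unit (int p + 1)"
    by (meson coprime_common_divisor dvd_refl)
  then show False
    using assms by simp
qed

lemma padic_rat_dense:
  assumes "p > 1" "e > 0"
  shows "\<exists>r. padic_rat p r \<and> \<bar>c - r\<bar> < e"
proof -
  obtain k where k: "1 / e < real p ^ k"
    using real_arch_pow[of "real p" "1 / e"] assms(1) by auto
  have pk: "real p ^ k > 0"
    using assms(1) by simp
  define r where "r = of_int \<lfloor>c * real p ^ k\<rfloor> / real p ^ k"
  have "c - r = (c * real p ^ k - of_int \<lfloor>c * real p ^ k\<rfloor>) / real p ^ k"
    unfolding r_def using pk by (simp add: field_simps)
  moreover have "0 \<le> c * real p ^ k - of_int \<lfloor>c * real p ^ k\<rfloor>"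
    "c * real p ^ k - of_int \<lfloor>c * real p ^ k\<rfloor> < 1"
    by linarith+
  ultimately have "0 \<le> c - r" "c - r < 1 / real p ^ k"
    using pk by (simp_all add: divide_strict_right_mono)
  moreover have "1 / real p ^ k < e"
    using k assms(2) pk by (simp add: field_simps)
  moreover have "padic_rat p r"
    unfolding r_def padic_rat_def by blast
  ultimately show ?thesis
    by (intro exI[of _ r]) simp
qed

lemma padic_vec_zero [simp]: "padic_vec p 0"
  by (simp add: padic_vec_def)

lemma padic_vec_add: "p > 0 \<Longrightarrow> padic_vec p x \<Longrightarrow> padic_vec p y \<Longrightarrow> padic_vec p (x + y)"
  unfolding padic_vec_def by (simp add: padic_rat_add)

lemma padic_vec_scaleR: "padic_rat p r \<Longrightarrow> padic_vec p x \<Longrightarrow> padic_vec p (r *\<^sub>R x)"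
  unfolding padic_vec_def by (simp add: padic_rat_mult)

lemma integral_imp_padic_vec: "integral_vec x \<Longrightarrow> padic_vec p x"
  unfolding padic_vec_def integral_vec_def by (blast intro: padic_rat_Ints)

lemma padic_rat_inner_integral:
  assumes "p > 0" "integral_vec y" "padic_vec p x"
  shows "padic_rat p (y \<bullet> x)"
  unfolding inner_vec_def using assms(2,3)
  by (intro padic_rat_sum[OF assms(1)])
    (auto simp: integral_vec_def padic_vec_def intro!: padic_rat_mult intro: padic_rat_Ints)

lemma integral_vec_inner_Ints: "integral_vec u \<Longrightarrow> integral_vec v \<Longrightarrow> u \<bullet> v \<in> \<int>"
  unfolding integral_vec_def inner_vec_def by (auto intro!: Ints_sum Ints_mult)

lemma integral_vec_lincomb:
  "integral_vec u \<Longrightarrow> integral_vec v \<Longrightarrow> a \<in> \<int> \<Longrightarrow> c \<in> \<int> \<Longrightarrow>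
    integral_vec (a *\<^sub>R u + c *\<^sub>R v)"
  unfolding integral_vec_def by (auto intro!: Ints_add Ints_mult)

lemma integral_vec_axis: "integral_vec (axis i 1)"
  by (simp add: integral_vec_def axis_def)

lemma integral_mat_row: "integral_mat A \<Longrightarrow> integral_vec (A $ i)"
  unfolding integral_mat_def integral_vec_def by blast

lemma padic_solution_imp_padic_dual:
  assumes "p > 0" "padic_vec p x" "A *v x = b" "integral_vec (y v* A)"
  shows "padic_rat p (y \<bullet> b)"
proof -
  have "y \<bullet> b = (y v* A) \<bullet> x"
    using assms(3) by (simp add: dot_lmul_matrix)
  then show ?thesis
    using padic_rat_inner_integral[OF assms(1,4,2)] by simp
qed

definition integral_lattice :: "(real ^ 'n) set \<Rightarrow> bool" where
  "integral_lattice L \<longleftrightarrow> 0 \<in> L \<and> (\<forall>v\<in>L. integral_vec v) \<and>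
     (\<forall>v\<in>L. \<forall>w\<in>L. \<forall>a c :: int. of_int a *\<^sub>R v + of_int c *\<^sub>R w \<in> L)"

lemma integral_lattice_lincomb:
  "integral_lattice L \<Longrightarrow> v \<in> L \<Longrightarrow> w \<in> L \<Longrightarrow> of_int a *\<^sub>R v + of_int c *\<^sub>R w \<in> L"
  unfolding integral_lattice_def by blast

lemma integral_lattice_coordinate_Ints: "integral_lattice L \<Longrightarrow> v \<in> L \<Longrightarrow> v $ i \<in> \<int>"
  unfolding integral_lattice_def integral_vec_def by blast

lemma integral_lattice_slice: "integral_lattice L \<Longrightarrow> integral_lattice {v \<in> L. v $ i = 0}"
  unfolding integral_lattice_def by auto

lemma integral_lattice_matrix_image:
  assumes "integral_mat A"
  shows "integral_lattice {A *v z | z. integral_vec z}"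
  unfolding integral_lattice_def
proof (intro conjI ballI allI)
  show "0 \<in> {A *v z | z. integral_vec z}"
    by (auto simp: integral_vec_def intro!: exI[of _ 0])
  fix v assume "v \<in> {A *v z | z. integral_vec z}"
  then obtain z where z: "v = A *v z" "integral_vec z"
    by blast
  show "integral_vec v"
    using integral_vec_inner_Ints[OF integral_mat_row[OF assms] z(2)]
    by (simp add: z(1) integral_vec_def matrix_vector_mul_component)
  fix w a c assume "w \<in> {A *v z | z. integral_vec z}"
  then obtain z' where z': "w = A *v z'" "integral_vec z'"
    by blast
  have "of_int a *\<^sub>R v + of_int c *\<^sub>R w = A *v (of_int a *\<^sub>R z + of_int c *\<^sub>R z')"
    by (simp add: z(1) z'(1) matrix_vector_right_distrib matrix_vector_mult_scaleR)
  then show "of_int a *\<^sub>R v + of_int c *\<^sub>R w \<in> {A *v z | z. integral_vec z}"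
    using integral_vec_lincomb[OF z(2) z'(2)] by auto
qed

lemma integral_lattice_coordinate_generator:
  assumes L: "integral_lattice L" and "v \<in> L" "v $ i \<noteq> 0"
  obtains w where "w \<in> L" "w $ i > 0" "\<And>u. u \<in> L \<Longrightarrow> \<exists>q::int. u $ i = of_int q * w $ i"
proof -
  obtain m where m: "v $ i = of_int m"
    using integral_lattice_coordinate_Ints[OF L \<open>v \<in> L\<close>] Ints_cases by metis
  have "of_int m *\<^sub>R v \<in> L"
    using integral_lattice_lincomb[OF L \<open>v \<in> L\<close> \<open>v \<in> L\<close>, of m 0] by simp
  moreover have "(of_int m *\<^sub>R v) $ i = real (nat (m * m))"
    using m by simp
  moreover have "nat (m * m) > 0"
    using m \<open>v $ i \<noteq> 0\<close> by (auto simp: zero_less_mult_iff)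
  ultimately have ex: "\<exists>n. 0 < n \<and> (\<exists>u\<in>L. u $ i = real n)"
    by blast
  define g where "g = (LEAST n. 0 < n \<and> (\<exists>u\<in>L. u $ i = real n))"
  obtain w where w: "w \<in> L" "w $ i = real g" and "g > 0"
    using LeastI_ex[OF ex] unfolding g_def by blast
  have "\<exists>q::int. u $ i = of_int q * w $ i" if "u \<in> L" for u
  proof -
    obtain n where n: "u $ i = of_int n"
      using integral_lattice_coordinate_Ints[OF L \<open>u \<in> L\<close>] Ints_cases by metis
    define q where "q = n div int g"
    define r where "r = n mod int g"
    have nqr: "n = q * int g + r" and r: "0 \<le> r" "r < int g"
      using \<open>g > 0\<close> by (simp_all add: q_def r_def)
    have "of_int 1 *\<^sub>R u + of_int (- q) *\<^sub>R w \<in> L"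
      using integral_lattice_lincomb[OF L \<open>u \<in> L\<close> w(1)] .
    moreover have "(of_int 1 *\<^sub>R u + of_int (- q) *\<^sub>R w) $ i = real (nat r)"
      using n w(2) nqr r(1) by simp
    moreover have "nat r < g"
      using r by linarith
    then have "\<not> (0 < nat r \<and> (\<exists>u\<in>L. u $ i = real (nat r)))"
      unfolding g_def by (rule not_less_Least)
    ultimately have "r = 0"
      using r(1) by auto
    then show ?thesis
      using n nqr w(2) by (intro exI[of _ q]) simp
  qed
  then show thesis
    using that w \<open>g > 0\<close> by simp
qed

lemma integral_lattice_slice_padic_dual:
  assumes L: "integral_lattice L" and w: "w \<in> L" "w $ i \<noteq> 0"
    and gen: "\<And>u. u \<in> L \<Longrightarrow> \<exists>q::int. u $ i = of_int q * w $ i"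
    and dual: "\<And>y. \<forall>v\<in>L. y \<bullet> v \<in> \<int> \<Longrightarrow> padic_rat p (y \<bullet> b)"
    and y: "\<forall>v\<in>{v \<in> L. v $ i = 0}. y \<bullet> v \<in> \<int>"
  shows "padic_rat p (y \<bullet> (b - (b $ i / w $ i) *\<^sub>R w))"
proof -
  define y' where "y' = y - axis i ((y \<bullet> w) / w $ i)"
  have "y' \<bullet> v \<in> \<int>" if "v \<in> L" for v
  proof -
    obtain q where q: "v $ i = of_int q * w $ i"
      using gen \<open>v \<in> L\<close> by blast
    define v0 where "v0 = of_int 1 *\<^sub>R v + of_int (- q) *\<^sub>R w"
    have "v0 \<in> L" "v0 $ i = 0"
      using integral_lattice_lincomb[OF L \<open>v \<in> L\<close> w(1), of 1 "- q"] q by (simp_all add: v0_def)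
    moreover have "y' \<bullet> v = y \<bullet> v0"
      using w(2) q by (simp add: y'_def v0_def inner_diff_left inner_diff_right inner_axis' algebra_simps)
    ultimately show ?thesis
      using y by simp
  qed
  then have "padic_rat p (y' \<bullet> b)"
    by (intro dual) blast
  moreover have "y' \<bullet> b = y \<bullet> (b - (b $ i / w $ i) *\<^sub>R w)"
    using w(2) by (simp add: y'_def inner_diff_left inner_diff_right inner_axis' field_simps)
  ultimately show ?thesis
    by simp
qed

lemma integral_lattice_padic_multiple_lift:
  assumes L: "integral_lattice L" and "p > 0" and w: "w \<in> L" "w $ i \<noteq> 0"
    and v0: "v0 \<in> L" "v0 $ i = 0"
    and v0F: "\<forall>j\<in>F. v0 $ j = real p ^ k * (b - (b $ i / w $ i) *\<^sub>R w) $ j"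
    and a: "b $ i / w $ i = of_int a / real p ^ l"
  shows "\<exists>v\<in>L. \<forall>j\<in>insert i F. v $ j = real p ^ (k + l) * b $ j"
proof
  define v where "v = of_int (int p ^ l) *\<^sub>R v0 + of_int (int p ^ k * a) *\<^sub>R w"
  show "v \<in> L"
    unfolding v_def using integral_lattice_lincomb[OF L v0(1) w(1)] .
  have a': "of_int a = real p ^ l * b $ i / w $ i"
    using a \<open>p > 0\<close> by (simp add: field_simps)
  have v_nth: "v $ j = real p ^ l * v0 $ j + real p ^ k * of_int a * w $ j" for j
    by (simp add: v_def)
  show "\<forall>j\<in>insert i F. v $ j = real p ^ (k + l) * b $ j"
  proof
    fix j assume "j \<in> insert i F"
    show "v $ j = real p ^ (k + l) * b $ j"
    proof (cases "j = i")
      case True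
      then show ?thesis
        using v0(2) w(2) by (simp add: v_nth a' power_add)
    next
      case False
      then have v0j: "v0 $ j = real p ^ k * (b $ j - b $ i / w $ i * w $ j)"
        using \<open>j \<in> insert i F\<close> v0F by simp
      show ?thesis
        unfolding v_nth v0j a' by (simp add: power_add algebra_simps)
    qed
  qed
qed

lemma integral_lattice_padic_multiple_on:
  fixes L :: "(real ^ 'm) set" and b :: "real ^ 'm"
  assumes "p > 0" "finite I" "integral_lattice L"
    and "\<And>y. \<forall>v\<in>L. y \<bullet> v \<in> \<int> \<Longrightarrow> padic_rat p (y \<bullet> b)"
  shows "\<exists>v\<in>L. \<exists>k. \<forall>j\<in>I. v $ j = real p ^ k * b $ j"
  using assms(2-)
proof (induction I arbitrary: L b rule: finite_induct)
  case empty
  then show ?case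
    by (auto simp: integral_lattice_def)
next
  case (insert i F L b)
  note L = \<open>integral_lattice L\<close> and dual = insert.prems(2)
  show ?case
  proof (cases "\<exists>w\<in>L. w $ i \<noteq> 0")
    case False
    have "b $ i = 0"
    proof (rule ccontr)
      assume "b $ i \<noteq> 0"
      have "padic_rat p (axis i (1 / ((real p + 1) * b $ i)) \<bullet> b)"
        using False by (intro dual) (simp add: inner_axis')
      then show False
        using \<open>b $ i \<noteq> 0\<close> not_padic_rat_inverse_Suc[OF \<open>p > 0\<close>] by (simp add: inner_axis')
    qed
    moreover have "\<exists>v\<in>L. \<exists>k. \<forall>j\<in>F. v $ j = real p ^ k * b $ j"
      using insert.IH[OF L dual] .
    ultimately show ?thesis
      using False by auto
  next
    case True
    then obtain w where w: "w \<in> L" "w $ i > 0"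
      and gen: "\<And>u. u \<in> L \<Longrightarrow> \<exists>q::int. u $ i = of_int q * w $ i"
      using integral_lattice_coordinate_generator[OF L] by metis
    have wi: "w $ i \<noteq> 0"
      using w(2) by simp
    have "\<exists>v\<in>{v \<in> L. v $ i = 0}. \<exists>k. \<forall>j\<in>F. v $ j = real p ^ k * (b - (b $ i / w $ i) *\<^sub>R w) $ j"
      by (rule insert.IH[OF integral_lattice_slice[OF L] integral_lattice_slice_padic_dual[OF L w(1) wi gen dual]])
    then obtain v0 k where v0: "v0 \<in> L" "v0 $ i = 0"
      and v0F: "\<forall>j\<in>F. v0 $ j = real p ^ k * (b - (b $ i / w $ i) *\<^sub>R w) $ j"
      by blast
    have "padic_rat p (axis i (1 / w $ i) \<bullet> b)"
      using gen wi by (intro dual) (fastforce simp: inner_axis')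
    then obtain a l where "b $ i / w $ i = of_int a / real p ^ l"
      by (auto simp: padic_rat_def inner_axis')
    then show ?thesis
      using integral_lattice_padic_multiple_lift[OF L \<open>p > 0\<close> w(1) wi v0 v0F] by blast
  qed
qed

lemma integral_lattice_padic_multiple:
  assumes "p > 0" "integral_lattice L" "\<And>y. \<forall>v\<in>L. y \<bullet> v \<in> \<int> \<Longrightarrow> padic_rat p (y \<bullet> b)"
  shows "\<exists>v\<in>L. \<exists>k. v = real p ^ k *\<^sub>R b"
  using integral_lattice_padic_multiple_on[of p UNIV L b] assms by (auto simp: vec_eq_iff)


lemma padic_solution_if_padic_dual:
  assumes "p > 0" "integral_mat A"
    and "\<And>y. integral_vec (y v* A) \<Longrightarrow> padic_rat p (y \<bullet> b)"
  shows "\<exists>x. padic_vec p x \<and> A *v x = b"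
proof -
  let ?L = "{A *v z | z. integral_vec z}"
  have "\<exists>v\<in>?L. \<exists>k. v = real p ^ k *\<^sub>R b"
  proof (rule integral_lattice_padic_multiple[OF assms(1) integral_lattice_matrix_image[OF assms(2)]])
    fix y :: "real ^ 'b"
    assume "\<forall>v\<in>?L. y \<bullet> v \<in> \<int>"
    then have "(y v* A) \<bullet> axis j 1 \<in> \<int>" for j
      using integral_vec_axis[of j] by (auto simp: dot_lmul_matrix)
    then have "integral_vec (y v* A)"
      by (simp add: integral_vec_def cart_eq_inner_axis)
    then show "padic_rat p (y \<bullet> b)"
      by (rule assms(3))
  qed
  then obtain z k where "integral_vec z" "A *v z = real p ^ k *\<^sub>R b"
    by blast
  then have "padic_vec p ((1 / real p ^ k) *\<^sub>R z)" "A *v ((1 / real p ^ k) *\<^sub>R z) = b"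
    using assms(1) by (simp_all add: padic_vec_scaleR padic_rat_inverse_power integral_imp_padic_vec
        matrix_vector_mult_scaleR)
  then show ?thesis
    by blast
qed

lemma span_insert_hyperplane:
  fixes a :: "'a::real_inner"
  assumes "z \<in> span (insert k0 S)" "S \<subseteq> {x. a \<bullet> x = 0}" "a \<bullet> k0 \<noteq> 0" "a \<bullet> z = 0"
  shows "z \<in> span S"
proof -
  obtain c where c: "z - c *\<^sub>R k0 \<in> span S"
    using assms(1) unfolding span_insert by blast
  have "span S \<subseteq> {x. a \<bullet> x = 0}"
    using assms(2) by (rule span_minimal) (rule subspace_hyperplane)
  then have "c * (a \<bullet> k0) = 0"
    using c assms(4) by (auto simp: inner_diff_right)
  then show ?thesis
    using c assms(3) by simp
qed

lemma integral_orthogonal_span: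
  fixes a :: "'i \<Rightarrow> real ^ 'n"
  assumes "finite I" "\<And>i. i \<in> I \<Longrightarrow> integral_vec (a i)" "\<forall>i\<in>I. a i \<bullet> z = 0"
  shows "z \<in> span {k. integral_vec k \<and> (\<forall>i\<in>I. a i \<bullet> k = 0)}"
  using assms
proof (induction I arbitrary: z rule: finite_induct)
  case empty
  have "Basis \<subseteq> {k :: real ^ 'n. integral_vec k}"
    by (auto simp: Basis_vec_def integral_vec_axis)
  then have "span (Basis :: (real ^ 'n) set) \<subseteq> span {k. integral_vec k}"
    by (rule span_mono)
  then show ?case
    by auto
next
  case (insert i F z)
  define S' where "S' = {k. integral_vec k \<and> (\<forall>j\<in>F. a j \<bullet> k = 0)}"
  define S where "S = {k. integral_vec k \<and> (\<forall>j\<in>insert i F. a j \<bullet> k = 0)}"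
  have "z \<in> span S'"
    unfolding S'_def using insert by auto
  show ?case
  proof (cases "\<forall>k\<in>S'. a i \<bullet> k = 0")
    case True
    then have "S' = S"
      unfolding S_def S'_def by auto
    then show ?thesis
      using \<open>z \<in> span S'\<close> unfolding S_def by simp
  next
    case False
    then obtain k0 where k0: "k0 \<in> S'" "a i \<bullet> k0 \<noteq> 0"
      by blast
    have ai: "integral_vec (a i)"
      using insert.prems(1) by simp
    \<comment> \<open>every k in S' differs from a multiple of k0 by the integral vector
      (a i . k0) k - (a i . k) k0, which lies in S\<close>
    have "S' \<subseteq> span (insert k0 S)"
    proof
      fix k assume "k \<in> S'"
      define u where "u = (a i \<bullet> k0) *\<^sub>R k + (- (a i \<bullet> k)) *\<^sub>R k0"
      have "integral_vec u"
        unfolding u_def using \<open>k \<in> S'\<close> k0(1)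
        by (intro integral_vec_lincomb) (auto simp: S'_def intro: integral_vec_inner_Ints[OF ai])
      moreover have "\<forall>j\<in>insert i F. a j \<bullet> u = 0"
        using \<open>k \<in> S'\<close> k0(1) by (auto simp: S'_def u_def inner_diff_right)
      ultimately have "u \<in> S"
        by (simp add: S_def)
      then have "(1 / (a i \<bullet> k0)) *\<^sub>R u + ((a i \<bullet> k) / (a i \<bullet> k0)) *\<^sub>R k0 \<in> span (insert k0 S)"
        by (intro span_add span_scale) (auto intro: span_base)
      moreover have "(1 / (a i \<bullet> k0)) *\<^sub>R u + ((a i \<bullet> k) / (a i \<bullet> k0)) *\<^sub>R k0 = k"
        using k0(2) by (simp add: u_def algebra_simps)
      ultimately show "k \<in> span (insert k0 S)"
        by simp
    qed
    then have "z \<in> span (insert k0 S)"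
      using \<open>z \<in> span S'\<close> span_mono span_span by blast
    moreover have "S \<subseteq> {x. a i \<bullet> x = 0}"
      by (auto simp: S_def)
    ultimately show ?thesis
      using span_insert_hyperplane k0(2) insert.prems(2) unfolding S_def by blast
  qed
qed

lemma padic_approx_in_span:
  fixes T :: "(real ^ 'n) set"
  assumes "p > 1" "finite T" "\<forall>v\<in>T. padic_vec p v" "e > 0"
  shows "\<exists>k\<in>span T. padic_vec p k \<and> norm ((\<Sum>v\<in>T. u v *\<^sub>R v) - k) < e"
  using assms(2-)
proof (induction T arbitrary: e rule: finite_induct)
  case empty
  then show ?case
    by (auto intro: span_zero)
next
  case (insert v T)
  obtain k where k: "k \<in> span T" "padic_vec p k" "norm ((\<Sum>w\<in>T. u w *\<^sub>R w) - k) < e / 2"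
    using insert.IH[of "e / 2"] insert.prems by auto
  have "0 < 2 * (norm v + 1)"
    by (simp add: add_nonneg_pos)
  then obtain r where r: "padic_rat p r" "\<bar>u v - r\<bar> * (2 * (norm v + 1)) < e"
    using padic_rat_dense[OF assms(1), of "e / (2 * (norm v + 1))" "u v"] insert.prems(2)
    by (auto simp: pos_less_divide_eq)
  have "norm ((u v - r) *\<^sub>R v) \<le> \<bar>u v - r\<bar> * (norm v + 1)"
    by (simp add: mult_left_mono)
  then have "norm ((u v - r) *\<^sub>R v) + norm ((\<Sum>w\<in>T. u w *\<^sub>R w) - k) < e"
    using r(2) k(3) by linarith
  then have "norm ((u v - r) *\<^sub>R v + ((\<Sum>w\<in>T. u w *\<^sub>R w) - k)) < e"
    by (rule norm_triangle_lt)
  moreover have "(u v - r) *\<^sub>R v + ((\<Sum>w\<in>T. u w *\<^sub>R w) - k) =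
      (\<Sum>w\<in>insert v T. u w *\<^sub>R w) - (r *\<^sub>R v + k)"
    using insert.hyps by (simp add: algebra_simps)
  moreover have "span T \<subseteq> span (insert v T)"
    by (rule span_mono) blast
  then have "r *\<^sub>R v + k \<in> span (insert v T)"
    using k(1) by (blast intro: span_add span_scale span_base)
  moreover have "padic_vec p (r *\<^sub>R v + k)"
    using assms(1) insert.prems(1) r(1) k(2) by (simp add: padic_vec_add padic_vec_scaleR)
  ultimately show ?case
    by metis
qed

lemma padic_dense_in_null_space:
  assumes "p > 1" "integral_mat A" "A *v z = 0" "e > 0"
  shows "\<exists>k. padic_vec p k \<and> A *v k = 0 \<and> norm (z - k) < e"
proof -
  have null_space: "A *v x = 0 \<longleftrightarrow> (\<forall>i\<in>UNIV. A $ i \<bullet> x = 0)" for x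
    by (simp add: vec_eq_iff matrix_vector_mul_component)
  let ?S = "{k. integral_vec k \<and> A *v k = 0}"
  have "z \<in> span ?S"
    using integral_orthogonal_span[of UNIV "($) A" z] assms(3) integral_mat_row[OF assms(2)]
    by (simp add: null_space)
  then obtain T u where T: "finite T" "T \<subseteq> ?S" and z: "z = (\<Sum>v\<in>T. u v *\<^sub>R v)"
    unfolding span_explicit by blast
  then obtain k where k: "k \<in> span T" "padic_vec p k" "norm (z - k) < e"
    using padic_approx_in_span[OF assms(1) T(1) _ assms(4)] integral_imp_padic_vec by blast
  have "span T \<subseteq> {x. A *v x = 0}"
    using T(2) by (intro span_minimal) (auto intro: linear_subspace_kernel matrix_vector_mul_linear)
  then show ?thesis
    using k by blast
qed

lemma padic_point_in_convex:
  fixes P :: "(real ^ 'n) set"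
  assumes "p > 1" "convex P" "P \<noteq> {}" "integral_mat A" "affine hull P = {x. A *v x = b}"
    and "padic_vec p x0" "A *v x0 = b"
  shows "\<exists>x\<in>P. padic_vec p x"
proof -
  obtain x1 where "x1 \<in> rel_interior P"
    using rel_interior_eq_empty assms(2,3) by blast
  then obtain e where "x1 \<in> P" "e > 0" and ball: "ball x1 e \<inter> affine hull P \<subseteq> P"
    unfolding mem_rel_interior_ball by blast
  have "A *v (x1 - x0) = 0"
    using hull_inc[OF \<open>x1 \<in> P\<close>, of affine] assms(5,7) by (simp add: matrix_vector_mult_diff_distrib)
  then obtain k where k: "padic_vec p k" "A *v k = 0" "norm (x1 - x0 - k) < e"
    using padic_dense_in_null_space[OF assms(1,4) _ \<open>e > 0\<close>] by blast
  have "x0 + k \<in> affine hull P"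
    using assms(5,7) k(2) by (simp add: matrix_vector_right_distrib)
  moreover have "x0 + k \<in> ball x1 e"
    using k(3) by (simp add: dist_norm algebra_simps)
  ultimately have "x0 + k \<in> P"
    using ball by blast
  moreover have "padic_vec p (x0 + k)"
    using assms(1,6) k(1) by (simp add: padic_vec_add)
  ultimately show ?thesis
    by blast
qed

lemma convex_polyhedron_of: "convex (polyhedron_of M d)"
proof -
  have "polyhedron_of M d = (\<Inter>i. {x. M $ i \<bullet> x \<le> d $ i})"
    unfolding polyhedron_of_def by (auto simp: matrix_vector_mul_component)
  then show ?thesis
    by (simp add: convex_INT convex_halfspace_le)
qed

theorem corollary2p6:
  fixes M :: "real ^ 'n ^ 'k" and d :: "real ^ 'k"
    and A :: "real ^ 'n ^ 'm" and b :: "real ^ 'm"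
  assumes "rational_mat M" and "rational_vec d"
    and "polyhedron_of M d \<noteq> {}"
    and "integral_mat A" and "integral_vec b"
    and "affine hull (polyhedron_of M d) = {x. A *v x = b}"
    and "prime p"
  shows "(\<exists>x \<in> polyhedron_of M d. padic_vec p x) \<longleftrightarrow>
         \<not> (\<exists>y :: real ^ 'm. integral_vec (y v* A) \<and> \<not> padic_rat p (y \<bullet> b))"
proof
  have "p > 0"
    using \<open>prime p\<close> prime_gt_0_nat by blast
  assume "\<exists>x \<in> polyhedron_of M d. padic_vec p x"
  then obtain x where "padic_vec p x" "A *v x = b"
    using hull_inc[of _ "polyhedron_of M d" affine] assms(6) by blast
  then show "\<not> (\<exists>y :: real ^ 'm. integral_vec (y v* A) \<and> \<not> padic_rat p (y \<bullet> b))"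
    using padic_solution_imp_padic_dual[OF \<open>p > 0\<close>] by blast
next
  have "p > 1"
    using \<open>prime p\<close> prime_gt_1_nat by blast
  assume "\<not> (\<exists>y :: real ^ 'm. integral_vec (y v* A) \<and> \<not> padic_rat p (y \<bullet> b))"
  then obtain x0 where "padic_vec p x0" "A *v x0 = b"
    using padic_solution_if_padic_dual[of p A b] \<open>p > 1\<close> assms(4) by auto
  then show "\<exists>x \<in> polyhedron_of M d. padic_vec p x"
    using padic_point_in_convex[OF \<open>p > 1\<close> convex_polyhedron_of assms(3,4,6)] by blast
qed

end
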